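(* Let $h=0$, let $f$ satisfy Assumption A2(i), assume $a_{ij}\neq0$ for every pair $i\ne j$, and let $f^*=\inf\{f(x):a^Tx=b\}>-\infty$. Let $(p_{ij})$ be any probability distribution on ordered pairs with $p_{ij}=p_{ji}>0$ for $i\neq j$ and $p_{ii}=0$, and let $x^k$ be generated by Algorithm (2-RCD) with $h=0$ and pairs drawn i.i.d. according to $p_{ij}$. Let $Q=\sum_{i\ne j}\frac{p_{ij}}{L_{ij}}Q_{ij}$ and let $\nu_2(Q)$ be the second smallest eigenvalue of $Q$, assumed positive. Then for all $k\ge0$, $$\min_{0\le l\le k}E\left[\left(M_3(x^l,\mathbf 1)\right)^2\right]\le\frac{2\,(f(x^0)-f^* )}{\nu_2(Q)\,(k+1)}.$$
   Context: Block structure: $n=\sum_{i=1}^N n_i$ with $N\ge2$, $I_n=[U_1\ \dots\ U_N]$, $\nabla_if(x)=U_i^T\nabla f(x)$, $a_i=U_i^Ta$, $a_{ij}=[a_i^T\ a_j^T]^T$, $\nabla_{ij}f(x)=[\nabla_if(x)^T\ \nabla_jf(x)^T]^T$, $U_{ij}=[U_i\ U_j]\in\mathbb{R}^{n\times(n_i+n_j)}$. Problem: $\min\{f(x): a^Tx=b\}$ with $a\in\mathbb{R}^n$ nonzero. Assumption A2(i): $f$ is differentiable and there are constants $L_{ij}=L_{ji}>0$ with $\|\nabla_{ij}f(x+U_is_i+U_js_j)-\nabla_{ij}f(x)\|\le L_{ij}\|[s_i^T\ s_j^T]^T\|$ for all $s_i,s_j$, $x$. Algorithm (2-RCD) with $h=0$: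 given $x^0$ with $a^Tx^0=b$, for $k\ge0$ choose a random pair $(i,j)=(i_k,j_k)$, $i\ne j$, and set $x^{k+1}=x^k+U_{ij}d_{ij}$ where $d_{ij}=\arg\min\{\langle\nabla_{ij}f(x^k),s\rangle+\frac{L_{ij}}2\|s\|^2: a_{ij}^Ts=0\}=-\frac1{L_{ij}}\big(I-\frac{a_{ij}a_{ij}^T}{a_{ij}^Ta_{ij}}\big)\nabla_{ij}f(x^k)$. $Q_{ij}=U_{ij}\big(I_{n_i+n_j}-\frac{a_{ij}a_{ij}^T}{a_{ij}^Ta_{ij}}\big)U_{ij}^T\in\mathbb{R}^{n\times n}$ (symmetric positive semidefinite, $Q_{ij}a=0$). For feasible $x$, $\nabla f(x)_\perp$ denotes the orthogonal projection of $\nabla f(x)$ onto $S=\{s:a^Ts=0\}$, and $M_3(x,\mathbf 1)=\|\nabla f(x)_\perp\|$ (Euclidean norm). *)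

theory Defs
  imports "HOL-Analysis.Analysis" "HOL-Probability.Probability"
          "HOL-Computational_Algebra.Polynomial"
begin

text \<open>Coordinates are indexed by the finite type 'n, blocks by the finite type 'b;
  blk k is the block containing coordinate k.  For a set S of blocks,
  bmask blk S v = (sum over i in S of U_i U_i^T) v keeps the block components of v in S.\<close>

definition bmask :: "('n::finite \<Rightarrow> 'b) \<Rightarrow> 'b set \<Rightarrow> real^'n \<Rightarrow> real^'n" where
  "bmask blk S v = (\<chi> k. if blk k \<in> S then v $ k else 0)"

text \<open>U_ij d_ij embedded in R^n (closed form of d_ij given in the paper):
  -(1/L_ij)(I - a_ij a_ij^T/(a_ij^T a_ij)) grad_ij f(x).\<close>

definition rcd_step :: "('n::finite \<Rightarrow> 'b) \<Rightarrow> real^'n \<Rightarrow> ('b \<Rightarrow> 'b \<Rightarrow> real)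
    \<Rightarrow> (real^'n \<Rightarrow> real^'n) \<Rightarrow> 'b \<times> 'b \<Rightarrow> real^'n \<Rightarrow> real^'n" where
  "rcd_step blk a L gradf ij x =
     (let i = fst ij; j = snd ij;
          g = bmask blk {i, j} (gradf x);
          aa = bmask blk {i, j} a
      in x - (1 / L i j) *\<^sub>R (g - ((aa \<bullet> g) / (aa \<bullet> aa)) *\<^sub>R aa))"

fun rcd_iter :: "('n::finite \<Rightarrow> 'b) \<Rightarrow> real^'n \<Rightarrow> ('b \<Rightarrow> 'b \<Rightarrow> real)
    \<Rightarrow> (real^'n \<Rightarrow> real^'n) \<Rightarrow> real^'n \<Rightarrow> (nat \<Rightarrow> 'b \<times> 'b) \<Rightarrow> nat \<Rightarrow> real^'n" where
  "rcd_iter blk a L gradf x0 \<omega> 0 = x0"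
| "rcd_iter blk a L gradf x0 \<omega> (Suc k) =
     rcd_step blk a L gradf (\<omega> k) (rcd_iter blk a L gradf x0 \<omega> k)"

definition proj_perp :: "real^'n::finite \<Rightarrow> real^'n \<Rightarrow> real^'n" where
  "proj_perp a g = g - ((a \<bullet> g) / (a \<bullet> a)) *\<^sub>R a"

definition M3 :: "real^'n::finite \<Rightarrow> (real^'n \<Rightarrow> real^'n) \<Rightarrow> real^'n \<Rightarrow> real" where
  "M3 a gradf x = norm (proj_perp a (gradf x))"

text \<open>Q_ij = U_ij (I - a_ij a_ij^T / (a_ij^T a_ij)) U_ij^T as an n x n matrix.\<close>

definition Qij :: "('n::finite \<Rightarrow> 'b) \<Rightarrow> real^'n \<Rightarrow> 'b \<Rightarrow> 'b \<Rightarrow> real^'n^'n" where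
  "Qij blk a i j =
     (let aa = bmask blk {i, j} a
      in \<chi> k l. (if k = l \<and> blk k \<in> {i, j} then 1 else 0) - aa $ k * aa $ l / (aa \<bullet> aa))"

text \<open>Characteristic polynomial det(X I - A); eigenvalues (with multiplicity) are its
  roots; nu2 A is the second smallest eigenvalue.\<close>

definition charpoly :: "real^'n::finite^'n \<Rightarrow> real poly" where
  "charpoly A = det (\<chi> i j. if i = j then [:- (A $ i $ j), 1:] else [:- (A $ i $ j):])"

definition nu2 :: "real^'n::finite^'n \<Rightarrow> real" where
  "nu2 A = sorted_list_of_multiset (proots (charpoly A)) ! 1"

end

theory Submission
  imports Defs
begin

text \<open>Each step of 2-RCD is a gradient step restricted to two blocks and projected onto
  a_ij^\<bottom>, so the block descent lemma gives f(x+) \<le> f(x) - |Q_ij \<nabla>f(x)|^2 / (2 L_ij).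
  Averaging over the random pair, E f(x+) \<le> f(x) - 1/2 \<nabla>f(x)^T Q \<nabla>f(x).  The matrix Q is
  symmetric positive semidefinite with kernel spanned by a, so the quadratic form dominates
  \<nu>_2(Q) |\<nabla>f(x)_\<bottom>|^2.  Telescoping the expected decrease from f(x^0) down to f^* and bounding
  the minimum by the average yields the rate.\<close>

lemma bmask_nth [simp]: "bmask blk S v $ k = (if blk k \<in> S then v $ k else 0)"
  by (simp add: bmask_def)

lemma bmask_diff: "bmask blk S (u - v) = bmask blk S u - bmask blk S v"
  by (simp add: vec_eq_iff)

lemma bmask_scaleR [simp]: "bmask blk S (c *\<^sub>R v) = c *\<^sub>R bmask blk S v"
  by (simp add: vec_eq_iff)

lemma bmask_uminus [simp]: "bmask blk S (- v) = - bmask blk S v"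
  by (simp add: vec_eq_iff)

lemma bmask_idem [simp]: "bmask blk S (bmask blk S v) = bmask blk S v"
  by (simp add: vec_eq_iff)

lemma inner_bmask_swap: "bmask blk S u \<bullet> v = u \<bullet> bmask blk S v"
  by (auto simp: inner_vec_def intro!: sum.cong)

lemma proj_perp_orthogonal: "c \<bullet> proj_perp c v = 0"
  by (cases "c = 0") (simp_all add: proj_perp_def inner_diff_right)

lemma proj_perp_self [simp]: "proj_perp c c = 0"
  by (cases "c = 0") (simp_all add: proj_perp_def)

lemma inner_proj_perp: "u \<bullet> proj_perp c v = proj_perp c u \<bullet> proj_perp c v"
  by (simp add: proj_perp_def [of c u] inner_diff_left proj_perp_orthogonal)

definition block_proj :: "('n::finite \<Rightarrow> 'b) \<Rightarrow> real^'n \<Rightarrow> 'b set \<Rightarrow> real^'n \<Rightarrow> real^'n" where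
  "block_proj blk a S v = proj_perp (bmask blk S a) (bmask blk S v)"

lemma Qij_mult: "Qij blk a i j *v v = block_proj blk a {i, j} v"
proof -
  define aa where "aa = bmask blk {i, j} a"
  have "(Qij blk a i j *v v) $ k
        = (\<Sum>l\<in>UNIV. (if l = k then bmask blk {i, j} v $ l else 0))
          - aa $ k / (aa \<bullet> aa) * (\<Sum>l\<in>UNIV. aa $ l * v $ l)" for k
    by (simp add: matrix_vector_mult_def Qij_def aa_def [symmetric] left_diff_distrib
        sum_subtractf sum_distrib_left mult.assoc mult_if_delta cong: if_cong)
  also have "\<dots> k = block_proj blk a {i, j} v $ k" for k
  proof -
    have "aa \<bullet> v = aa \<bullet> bmask blk {i, j} v"
      by (simp add: aa_def inner_bmask_swap)
    then show ?thesis
      by (simp add: block_proj_def proj_perp_def aa_def [symmetric] inner_vec_def)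
  qed
  finally show ?thesis
    by (simp add: vec_eq_iff)
qed

lemma bmask_block_proj [simp]: "bmask blk S (block_proj blk a S v) = block_proj blk a S v"
  by (simp add: block_proj_def proj_perp_def bmask_diff)

lemma inner_block_proj:
  "u \<bullet> block_proj blk a S v = block_proj blk a S u \<bullet> block_proj blk a S v"
proof -
  have "u \<bullet> block_proj blk a S v = bmask blk S u \<bullet> block_proj blk a S v"
    using inner_bmask_swap [of blk S u "block_proj blk a S v"] by simp
  then show ?thesis
    using inner_proj_perp [of "bmask blk S u" "bmask blk S a" "bmask blk S v"]
    by (simp add: block_proj_def)
qed

lemma block_proj_self [simp]: "block_proj blk a S a = 0"
  by (simp add: block_proj_def)

lemma block_proj_orthogonal: "a \<bullet> block_proj blk a S v = 0"
  by (simp add: inner_block_proj [of a])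

lemma block_proj_eq_0_imp_parallel:
  assumes "block_proj blk a S v = 0" "blk k \<in> S" "blk l \<in> S"
  shows "v $ k * a $ l = v $ l * a $ k"
proof -
  define \<kappa> where "\<kappa> = (bmask blk S a \<bullet> bmask blk S v) / (bmask blk S a \<bullet> bmask blk S a)"
  have "bmask blk S v = \<kappa> *\<^sub>R bmask blk S a"
    using assms(1) by (simp add: block_proj_def proj_perp_def \<kappa>_def)
  then have m: "bmask blk S v $ m = \<kappa> * bmask blk S a $ m" for m
    by simp
  have "v $ k = \<kappa> * a $ k" "v $ l = \<kappa> * a $ l"
    using m [of k] m [of l] assms(2,3) by simp_all
  then show ?thesis
    by simp
qed

lemma nonneg_quadratic_imp_linear_coeff_0:
  fixes b K :: real
  assumes nonneg: "\<And>t. 0 \<le> 2 * t * b + t * t * K"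
  shows "b = 0"
proof (rule ccontr)
  assume "b \<noteq> 0"
  define m where "m = \<bar>K\<bar> + 1"
  have m: "m > 0" by (simp add: m_def)
  define t where "t = - b / m"
  have "t * t * K \<le> t * t * m" by (intro mult_left_mono) (auto simp: m_def)
  also have "t * t * m = b * b / m" using m by (simp add: t_def field_simps)
  finally have "t * t * K \<le> b * b / m" .
  moreover have "2 * t * b = - 2 * (b * b / m)"
    by (simp add: t_def)
  ultimately have "2 * t * b + t * t * K \<le> - (b * b / m)"
    by linarith
  moreover have "0 < b * b"
    using not_real_square_gt_zero [of b] \<open>b \<noteq> 0\<close> by blast
  then have "b * b / m > 0"
    using m by simp
  ultimately show False using nonneg[of t] by linarith
qed

lemma semidefinite_on_hyperplane_null_vector:
  fixes B :: "real^'n::finite^'n"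
  assumes sym: "\<And>u w. u \<bullet> (B *v w) = w \<bullet> (B *v u)"
    and nonneg: "\<And>u. a \<bullet> u = 0 \<Longrightarrow> 0 \<le> u \<bullet> (B *v u)"
    and v: "a \<bullet> v = 0" "v \<bullet> (B *v v) = 0" "a \<bullet> (B *v v) = 0"
  shows "B *v v = 0"
proof -
  define r where "r = B *v v"
  have "0 \<le> 2 * t * (r \<bullet> r) + t * t * (r \<bullet> (B *v r))" for t
  proof -
    have "0 \<le> (v + t *\<^sub>R r) \<bullet> (B *v (v + t *\<^sub>R r))"
      using v by (intro nonneg) (simp add: r_def inner_add_right)
    also have "\<dots> = 2 * t * (r \<bullet> r) + t * t * (r \<bullet> (B *v r))"
      using sym [of v r] v(2)
      by (simp add: r_def matrix_vector_right_distrib matrix_vector_mult_scaleR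
          inner_add_left inner_add_right algebra_simps)
    finally show ?thesis .
  qed
  then have "r \<bullet> r = 0"
    by (rule nonneg_quadratic_imp_linear_coeff_0)
  then show ?thesis
    by (simp add: r_def)
qed

lemma exists_min_eigenvector_on_hyperplane:
  fixes Q :: "real^'n::finite^'n"
  assumes sym: "\<And>u w. u \<bullet> (Q *v w) = w \<bullet> (Q *v u)"
    and Qa: "Q *v a = 0" and dim: "CARD('n) \<ge> 2"
  obtains \<mu> v0 where "v0 \<noteq> 0" "a \<bullet> v0 = 0" "Q *v v0 = \<mu> *\<^sub>R v0"
    "\<And>u. a \<bullet> u = 0 \<Longrightarrow> \<mu> * (u \<bullet> u) \<le> u \<bullet> (Q *v u)"
proof -
  define C where "C = sphere (0::real^'n) 1 \<inter> {v. a \<bullet> v = 0}"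
  obtain e :: "real^'n" where e: "e \<noteq> 0" "orthogonal a e"
    using orthogonal_to_vector_exists [of a] dim by auto
  then have "e /\<^sub>R norm e \<in> C"
    by (simp add: C_def orthogonal_def)
  moreover have "compact C"
    unfolding C_def by (intro compact_Int_closed closed_hyperplane) simp
  moreover have "continuous_on C (\<lambda>v. v \<bullet> (Q *v v))"
    by (intro continuous_intros linear_continuous_on)
      (auto simp: linear_conv_bounded_linear [symmetric])
  ultimately obtain v0 where v0: "v0 \<in> C" "\<And>u. u \<in> C \<Longrightarrow> v0 \<bullet> (Q *v v0) \<le> u \<bullet> (Q *v u)"
    using continuous_attains_inf [of C] by blast
  define \<mu> where "\<mu> = v0 \<bullet> (Q *v v0)"
  have v0_unit: "v0 \<bullet> v0 = 1" and av0: "a \<bullet> v0 = 0"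
    using v0(1) by (auto simp: C_def norm_eq_1)
  have min: "\<mu> * (u \<bullet> u) \<le> u \<bullet> (Q *v u)" if "a \<bullet> u = 0" for u
  proof (cases "u = 0")
    case False
    have "(1 / norm u) *\<^sub>R u \<in> C"
      using that False by (simp add: C_def inner_scaleR_right)
    then have "\<mu> \<le> (u \<bullet> (Q *v u)) / (norm u)\<^sup>2"
      unfolding \<mu>_def by (auto dest!: v0(2) simp: matrix_vector_mult_scaleR power2_eq_square)
    then show ?thesis
      using False by (simp add: dot_square_norm field_simps)
  qed simp
  define B where "B = Q - \<mu> *\<^sub>R mat 1"
  have B_mult: "B *v u = Q *v u - \<mu> *\<^sub>R u" for u
    by (simp add: B_def matrix_vector_mult_diff_rdistrib scaleR_matrix_vector_assoc [symmetric])
  have "B *v v0 = 0"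
  proof (rule semidefinite_on_hyperplane_null_vector [of B a])
    show "u \<bullet> (B *v w) = w \<bullet> (B *v u)" for u w
      using sym [of u w] by (simp add: B_mult inner_diff_right inner_commute)
    show "0 \<le> u \<bullet> (B *v u)" if "a \<bullet> u = 0" for u
      using min [OF that] by (simp add: B_mult inner_diff_right)
    show "v0 \<bullet> (B *v v0) = 0" "a \<bullet> (B *v v0) = 0"
      using sym [of a v0] Qa v0_unit av0 by (simp_all add: B_mult inner_diff_right \<mu>_def)
  qed (fact av0)
  then have "Q *v v0 = \<mu> *\<^sub>R v0"
    by (simp add: B_mult)
  moreover have "v0 \<noteq> 0"
    using v0_unit by auto
  ultimately show thesis
    using that av0 min by blast
qed

lemma det_eq_0_iff_nontrivial_kernel:
  fixes A :: "'a::field^'n^'n"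
  shows "det A = 0 \<longleftrightarrow> (\<exists>v. v \<noteq> 0 \<and> A *v v = 0)"
  by (metis invertible_det_nz invertible_left_inverse matrix_left_invertible_ker)

lemma poly_charpoly: "poly (charpoly A) x = det (x *\<^sub>R mat 1 - A)"
  unfolding charpoly_def det_def
  by (auto simp: poly_sum poly_prod mat_def intro!: sum.cong prod.cong)

lemma charpoly_root_iff_eigenvalue:
  "poly (charpoly A) \<mu> = 0 \<longleftrightarrow> (\<exists>v. v \<noteq> 0 \<and> A *v v = \<mu> *\<^sub>R v)"
  by (simp add: poly_charpoly det_eq_0_iff_nontrivial_kernel matrix_vector_mult_diff_rdistrib
      scaleR_matrix_vector_assoc [symmetric] eq_commute [of "\<mu> *\<^sub>R _"])

lemma charpoly_nonzero_if_psd: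
  fixes A :: "real^'n::finite^'n"
  assumes psd: "\<And>v. 0 \<le> v \<bullet> (A *v v)"
  shows "charpoly A \<noteq> 0"
proof
  assume "charpoly A = 0"
  then obtain v where "v \<noteq> 0" "A *v v = (-1) *\<^sub>R v"
    using charpoly_root_iff_eigenvalue [of A "-1"] by auto
  then have "v \<bullet> (A *v v) = - (v \<bullet> v)" "0 < v \<bullet> v"
    by simp_all
  with psd [of v] show False
    by linarith
qed

lemma sorted_nth_1_le:
  fixes xs :: "'a::linorder list"
  assumes "sorted xs" "x \<in> set xs" "y \<in> set xs" "x \<noteq> y" "x \<le> m" "y \<le> m"
  shows "xs ! 1 \<le> m"
proof -
  obtain i j where ij: "i < length xs" "xs ! i = x" "j < length xs" "xs ! j = y"
    using assms(2,3) by (auto simp: in_set_conv_nth)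
  moreover have "i \<noteq> j"
    using ij assms(4) by auto
  ultimately have "1 \<le> max i j" "max i j < length xs"
    by (cases "i \<le> j"; simp add: max_def)+
  then have "xs ! 1 \<le> xs ! max i j"
    by (rule sorted_nth_mono [OF assms(1)])
  also have "xs ! max i j \<le> m"
    using ij assms(5,6) by (auto simp: max_def)
  finally show ?thesis .
qed

lemma nu2_le_of_two_eigenvalues:
  fixes A :: "real^'n::finite^'n"
  assumes psd: "\<And>v. 0 \<le> v \<bullet> (A *v v)"
    and eig: "poly (charpoly A) x = 0" "poly (charpoly A) y = 0" "x \<noteq> y" "x \<le> m" "y \<le> m"
  shows "nu2 A \<le> m"
  unfolding nu2_def
  by (rule sorted_nth_1_le [of _ x y]) (use charpoly_nonzero_if_psd [OF psd] eig in auto)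

lemma quadratic_form_proj_perp:
  fixes Q :: "real^'n::finite^'n"
  assumes sym: "\<And>u w. u \<bullet> (Q *v w) = w \<bullet> (Q *v u)" and Qa: "Q *v a = 0"
  shows "g \<bullet> (Q *v g) = proj_perp a g \<bullet> (Q *v proj_perp a g)"
proof -
  have "Q *v g = Q *v proj_perp a g"
    using Qa by (simp add: proj_perp_def matrix_vector_mult_diff_distrib matrix_vector_mult_scaleR)
  then show ?thesis
    using sym [of g "proj_perp a g"] by simp
qed

text \<open>0 (eigenvector a) and the minimum \<mu> > 0 of the Rayleigh quotient on a^\<bottom> are two
  distinct roots of the characteristic polynomial, so the second smallest root is at most \<mu>.\<close>

lemma nu2_mult_norm_proj_perp_le:
  fixes Q :: "real^'n::finite^'n"
  assumes sym: "\<And>u w. u \<bullet> (Q *v w) = w \<bullet> (Q *v u)"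
    and psd: "\<And>v. 0 \<le> v \<bullet> (Q *v v)"
    and Qa: "Q *v a = 0" and "a \<noteq> 0"
    and definite: "\<And>v. a \<bullet> v = 0 \<Longrightarrow> v \<bullet> (Q *v v) = 0 \<Longrightarrow> v = 0"
    and dim: "CARD('n) \<ge> 2"
  shows "nu2 Q * (norm (proj_perp a g))\<^sup>2 \<le> g \<bullet> (Q *v g)"
proof -
  obtain \<mu> v0 where v0: "v0 \<noteq> 0" "a \<bullet> v0 = 0" "Q *v v0 = \<mu> *\<^sub>R v0"
    and min: "\<And>u. a \<bullet> u = 0 \<Longrightarrow> \<mu> * (u \<bullet> u) \<le> u \<bullet> (Q *v u)"
    using exists_min_eigenvector_on_hyperplane [OF sym Qa dim] by blast
  have "\<mu> \<noteq> 0"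
    using definite [of v0] v0 by auto
  moreover have "0 \<le> \<mu> * (v0 \<bullet> v0)"
    using psd [of v0] v0(3) by simp
  moreover have "0 < v0 \<bullet> v0"
    using v0(1) by simp
  ultimately have "0 < \<mu>"
    using mult_neg_pos [of \<mu> "v0 \<bullet> v0"] by linarith
  moreover have "poly (charpoly Q) 0 = 0" "poly (charpoly Q) \<mu> = 0"
    using \<open>a \<noteq> 0\<close> Qa v0 by (auto simp: charpoly_root_iff_eigenvalue)
  ultimately have "nu2 Q \<le> \<mu>"
    by (intro nu2_le_of_two_eigenvalues [OF psd, of 0 \<mu>]) auto
  then have "nu2 Q * (norm (proj_perp a g))\<^sup>2 \<le> \<mu> * (proj_perp a g \<bullet> proj_perp a g)"
    by (simp add: dot_square_norm mult_right_mono)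
  also have "\<dots> \<le> g \<bullet> (Q *v g)"
    using min [OF proj_perp_orthogonal] quadratic_form_proj_perp [OF sym Qa] by simp
  finally show ?thesis .
qed

definition Q_weighted :: "('n::finite \<Rightarrow> 'b::finite) \<Rightarrow> real^'n \<Rightarrow> ('b \<Rightarrow> 'b \<Rightarrow> real) \<Rightarrow> real^'n^'n"
  where "Q_weighted blk a w = (\<Sum>(i, j)\<in>{(i, j). i \<noteq> j}. w i j *\<^sub>R Qij blk a i j)"

lemma sum_matrix_vector_mult: "finite A \<Longrightarrow> sum F A *v v = (\<Sum>x\<in>A. F x *v v)"
  by (induction A rule: finite_induct) (simp_all add: matrix_vector_mult_add_rdistrib)

lemma inner_Q_weighted:
  "u \<bullet> (Q_weighted blk a w *v v) = (\<Sum>(i, j)\<in>{(i, j). i \<noteq> j}.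
     w i j * (block_proj blk a {i, j} u \<bullet> block_proj blk a {i, j} v))"
  by (simp add: Q_weighted_def sum_matrix_vector_mult case_prod_beta inner_sum_right
      scaleR_matrix_vector_assoc [symmetric] Qij_mult inner_block_proj [of u])

lemma Q_weighted_symmetric:
  "u \<bullet> (Q_weighted blk a w *v v) = v \<bullet> (Q_weighted blk a w *v u)"
  by (simp add: inner_Q_weighted inner_commute)

lemma Q_weighted_nonneg:
  assumes "\<And>i j. i \<noteq> j \<Longrightarrow> 0 \<le> w i j"
  shows "0 \<le> v \<bullet> (Q_weighted blk a w *v v)"
  unfolding inner_Q_weighted using assms by (auto intro!: sum_nonneg mult_nonneg_nonneg)

lemma Q_weighted_mult_a: "Q_weighted blk a w *v a = 0"
  by (simp add: Q_weighted_def sum_matrix_vector_mult case_prod_beta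
      scaleR_matrix_vector_assoc [symmetric] Qij_mult)

text \<open>Q vanishes only on the line through a: each Q_ij forces v to be parallel to a on
  the blocks i, j, and any two coordinates lie in a common pair of blocks.\<close>

lemma Q_weighted_definite:
  fixes blk :: "'n::finite \<Rightarrow> 'b::finite"
  assumes w_pos: "\<And>i j. i \<noteq> j \<Longrightarrow> 0 < w i j" and blocks: "CARD('b) \<ge> 2"
    and "a \<noteq> 0" "a \<bullet> v = 0" and null: "v \<bullet> (Q_weighted blk a w *v v) = 0"
  shows "v = 0"
proof -
  have "\<forall>(i, j)\<in>{(i, j). i \<noteq> j}. w i j * (block_proj blk a {i, j} v \<bullet> block_proj blk a {i, j} v) = 0"
    using null w_pos unfolding inner_Q_weighted
    by (subst (asm) sum_nonneg_eq_0_iff) (auto simp: less_imp_le)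
  then have proj0: "block_proj blk a {i, j} v = 0" if "i \<noteq> j" for i j
    using that w_pos [OF that] by fastforce
  have cross: "v $ k * a $ l = v $ l * a $ k" for k l
  proof -
    have "\<not> CARD('b) \<le> Suc 0"
      using blocks by simp
    then obtain b1 b2 :: 'b where "b1 \<noteq> b2"
      by (auto simp: card_le_Suc0_iff_eq)
    define j where "j = (if blk l \<noteq> blk k then blk l else if b1 = blk k then b2 else b1)"
    have "j \<noteq> blk k" "blk l \<in> {blk k, j}"
      using \<open>b1 \<noteq> b2\<close> by (auto simp: j_def)
    then show ?thesis
      by (intro block_proj_eq_0_imp_parallel [OF proj0]) auto
  qed
  obtain l where l: "a $ l \<noteq> 0"
    using \<open>a \<noteq> 0\<close> by (auto simp: vec_eq_iff)
  define \<kappa> where "\<kappa> = v $ l / a $ l"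
  have v: "v = \<kappa> *\<^sub>R a"
    using cross [of _ l] l by (simp add: \<kappa>_def vec_eq_iff field_simps)
  then have "\<kappa> * (a \<bullet> a) = 0"
    using \<open>a \<bullet> v = 0\<close> by simp
  with \<open>a \<noteq> 0\<close> show "v = 0"
    by (simp add: v)
qed

lemma GDERIV_along_line:
  assumes grad: "\<And>x. GDERIV f x :> gradf x"
  shows "((\<lambda>t. f (x + t *\<^sub>R s)) has_real_derivative (gradf (x + t *\<^sub>R s) \<bullet> s)) (at t)"
proof -
  have "((\<lambda>t. x + t *\<^sub>R s) has_derivative (\<lambda>h. h *\<^sub>R s)) (at t)"
    by (auto intro!: derivative_eq_intros)
  from this grad [of "x + t *\<^sub>R s", unfolded gderiv_def]
  have "((\<lambda>t. f (x + t *\<^sub>R s)) has_derivative (\<lambda>h. (h *\<^sub>R s) \<bullet> gradf (x + t *\<^sub>R s))) (at t)"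
    by (rule has_derivative_compose)
  then show ?thesis
    unfolding has_field_derivative_def
    by (rule has_derivative_eq_rhs) (auto simp: inner_commute)
qed

lemma block_descent:
  fixes f :: "real^'n::finite \<Rightarrow> real"
  assumes grad: "\<And>x. GDERIV f x :> gradf x"
    and lipschitz: "\<And>s. norm (bmask blk S (gradf (x + bmask blk S s) - gradf x))
                          \<le> L * norm (bmask blk S s)"
    and s: "bmask blk S s = s"
  shows "f (x + s) \<le> f x + gradf x \<bullet> s + L / 2 * (s \<bullet> s)"
proof -
  define \<psi> where "\<psi> t = f (x + t *\<^sub>R s) - (t * (gradf x \<bullet> s) + L / 2 * t\<^sup>2 * (s \<bullet> s))" for t
  have \<psi>': "(\<psi> has_real_derivative
      (gradf (x + t *\<^sub>R s) - gradf x) \<bullet> s - L * t * (s \<bullet> s)) (at t)" for t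
    unfolding \<psi>_def
    by (rule derivative_eq_intros GDERIV_along_line [OF grad] | simp add: inner_diff_left)+
  have bound: "(gradf (x + t *\<^sub>R s) - gradf x) \<bullet> s \<le> L * t * (s \<bullet> s)" if "0 < t" for t
  proof -
    have lip: "norm (bmask blk S (gradf (x + t *\<^sub>R s) - gradf x)) \<le> L * norm (t *\<^sub>R s)"
      using lipschitz [of "t *\<^sub>R s"] by (simp only: bmask_scaleR s)
    have "(gradf (x + t *\<^sub>R s) - gradf x) \<bullet> s = bmask blk S (gradf (x + t *\<^sub>R s) - gradf x) \<bullet> s"
      by (simp only: inner_bmask_swap s)
    also have "\<dots> \<le> norm (bmask blk S (gradf (x + t *\<^sub>R s) - gradf x)) * norm s"
      by (rule norm_cauchy_schwarz)
    also have "\<dots> \<le> L * norm (t *\<^sub>R s) * norm s"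
      using lip by (rule mult_right_mono) simp
    also have "\<dots> = L * t * (s \<bullet> s)"
      using that by (simp add: dot_square_norm power2_eq_square)
    finally show ?thesis .
  qed
  have "\<psi> 1 \<le> \<psi> 0"
  proof (rule DERIV_nonpos_imp_decreasing_open [of 0 1 \<psi>])
    fix t :: real
    assume "0 < t" "t < 1"
    then show "\<exists>y. (\<psi> has_real_derivative y) (at t) \<and> y \<le> 0"
      using \<psi>' [of t] bound [of t] by auto
  next
    show "continuous_on {0..1} \<psi>"
      using \<psi>' by (meson DERIV_isCont continuous_at_imp_continuous_on)
  qed simp
  then show ?thesis
    by (simp add: \<psi>_def)
qed

lemma rcd_step_eq:
  "rcd_step blk a L gradf (i, j) x = x - (1 / L i j) *\<^sub>R block_proj blk a {i, j} (gradf x)"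
  by (simp add: rcd_step_def Let_def block_proj_def proj_perp_def inner_bmask_swap [of blk _ a])

lemma rcd_step_decrease:
  fixes f :: "real^'n::finite \<Rightarrow> real"
  assumes grad: "\<And>x. GDERIV f x :> gradf x"
    and lipschitz: "\<And>x s. norm (bmask blk {i, j} (gradf (x + bmask blk {i, j} s) - gradf x))
                          \<le> L i j * norm (bmask blk {i, j} s)"
    and "0 < L i j"
  shows "f (rcd_step blk a L gradf (i, j) x)
         \<le> f x - 1 / (2 * L i j) * (block_proj blk a {i, j} (gradf x) \<bullet> block_proj blk a {i, j} (gradf x))"
proof -
  define q where "q = block_proj blk a {i, j} (gradf x)"
  have "f (x + (- 1 / L i j) *\<^sub>R q)
        \<le> f x + gradf x \<bullet> ((- 1 / L i j) *\<^sub>R q) + L i j / 2 * (((- 1 / L i j) *\<^sub>R q) \<bullet> ((- 1 / L i j) *\<^sub>R q))"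
    by (rule block_descent [OF grad lipschitz]) (simp add: q_def)
  also have "\<dots> = f x - 1 / (2 * L i j) * (q \<bullet> q)"
    using \<open>0 < L i j\<close> inner_block_proj [of "gradf x" blk a "{i, j}"]
    by (simp add: q_def field_simps power2_eq_square)
  finally show ?thesis
    by (simp add: rcd_step_eq q_def)
qed

lemma rcd_step_feasible: "a \<bullet> rcd_step blk a L gradf ij x = a \<bullet> x"
  by (cases ij) (simp add: rcd_step_eq inner_diff_right block_proj_orthogonal)

lemma rcd_iter_feasible: "a \<bullet> rcd_iter blk a L gradf x0 \<omega> m = a \<bullet> x0"
  by (induction m) (simp_all add: rcd_step_feasible)

lemma expectation_rcd_step_le:
  fixes f :: "real^'n::finite \<Rightarrow> real" and P :: "('b::finite \<times> 'b) pmf"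
  assumes grad: "\<And>x. GDERIV f x :> gradf x"
    and lipschitz: "\<And>i j x s. i \<noteq> j \<Longrightarrow>
          norm (bmask blk {i, j} (gradf (x + bmask blk {i, j} s) - gradf x))
            \<le> L i j * norm (bmask blk {i, j} s)"
    and L_pos: "\<And>i j. i \<noteq> j \<Longrightarrow> 0 < L i j"
    and p_diag: "\<And>i. pmf P (i, i) = 0"
  shows "measure_pmf.expectation P (\<lambda>y. f (rcd_step blk a L gradf y x))
         \<le> f x - 1 / 2 * (gradf x \<bullet> (Q_weighted blk a (\<lambda>i j. pmf P (i, j) / L i j) *v gradf x))"
proof -
  define Off where "Off = {(i::'b, j). i \<noteq> j}"
  define q where "q i j = block_proj blk a {i, j} (gradf x) \<bullet> block_proj blk a {i, j} (gradf x)" for i j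
  have E: "measure_pmf.expectation P h = (\<Sum>(i, j)\<in>Off. h (i, j) * pmf P (i, j))" for h
    using p_diag by (subst integral_measure_pmf_real [where A = Off])
      (auto simp: Off_def set_pmf_eq case_prod_beta)
  have decrease: "f (rcd_step blk a L gradf (i, j) x) * pmf P (i, j)
      \<le> (f x - 1 / (2 * L i j) * q i j) * pmf P (i, j)" if "i \<noteq> j" for i j
    unfolding q_def using rcd_step_decrease [where blk = blk and i = i and j = j and L = L,
      OF grad lipschitz [OF that] L_pos [OF that]]
    by (rule mult_right_mono) simp
  have "measure_pmf.expectation P (\<lambda>y. f (rcd_step blk a L gradf y x))
        \<le> (\<Sum>(i, j)\<in>Off. (f x - 1 / (2 * L i j) * q i j) * pmf P (i, j))"
    unfolding E by (rule sum_mono) (use decrease in \<open>auto simp: Off_def\<close>)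
  also have "\<dots> = f x * (\<Sum>(i, j)\<in>Off. pmf P (i, j)) - 1 / 2 * (\<Sum>(i, j)\<in>Off. pmf P (i, j) / L i j * q i j)"
    by (simp add: case_prod_beta sum_subtractf sum_distrib_left left_diff_distrib algebra_simps)
  also have "(\<Sum>(i, j)\<in>Off. pmf P (i, j)) = 1"
    using E [of "\<lambda>_. 1"] by simp
  finally show ?thesis
    by (simp add: inner_Q_weighted Off_def q_def)
qed

lemma expectation_finite_pmf:
  "finite (set_pmf M) \<Longrightarrow> measure_pmf.expectation M h = (\<Sum>x\<in>set_pmf M. h x * pmf M x)"
  by (rule integral_measure_pmf_real) auto

lemma expectation_pair_pmf_finite:
  fixes F :: "'a \<times> 'c \<Rightarrow> real"
  assumes A: "finite (set_pmf A)" and B: "finite (set_pmf B)"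
  shows "measure_pmf.expectation (pair_pmf A B) F
       = measure_pmf.expectation B (\<lambda>y. measure_pmf.expectation A (\<lambda>x. F (x, y)))"
proof -
  have "measure_pmf.expectation (pair_pmf A B) F
        = (\<Sum>x\<in>set_pmf A. \<Sum>y\<in>set_pmf B. F (x, y) * (pmf A x * pmf B y))"
    using A B by (simp add: expectation_finite_pmf sum.cartesian_product)
      (auto simp: pmf_pair intro!: sum.cong)
  also have "\<dots> = (\<Sum>y\<in>set_pmf B. (\<Sum>x\<in>set_pmf A. F (x, y) * pmf A x) * pmf B y)"
    by (subst sum.swap) (simp add: sum_distrib_right mult.assoc)
  finally show ?thesis
    using A B by (simp add: expectation_finite_pmf)
qed

lemma finite_set_Pi_pmf:
  "finite A \<Longrightarrow> finite (set_pmf (Pi_pmf A d (\<lambda>_. P :: 'c::finite pmf)))"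
  by (auto simp: set_Pi_pmf intro!: finite_PiE_dflt)

lemma expectation_Pi_pmf_lessThan_Suc:
  fixes P :: "'c::finite pmf" and H :: "(nat \<Rightarrow> 'c) \<Rightarrow> real"
  shows "measure_pmf.expectation (Pi_pmf {..<Suc l} d (\<lambda>_. P)) H
       = measure_pmf.expectation (Pi_pmf {..<l} d (\<lambda>_. P))
           (\<lambda>\<omega>. measure_pmf.expectation P (\<lambda>y. H (fun_upd \<omega> l y)))"
  by (simp add: lessThan_Suc Pi_pmf_insert expectation_pair_pmf_finite finite_set_Pi_pmf case_prod_beta)

lemma rcd_iter_fun_upd:
  "m \<le> l \<Longrightarrow> rcd_iter blk a L gradf x0 (fun_upd \<omega> l y) m = rcd_iter blk a L gradf x0 \<omega> m"
  by (induction m) auto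

text \<open>Since x^l depends only on the pairs drawn before step l, the per-step expected decrease
  carries over to the iterates.\<close>

lemma expectation_rcd_iter_Suc_le:
  fixes blk :: "'n::finite \<Rightarrow> 'b::finite" and a x0 :: "real^'n" and L :: "'b \<Rightarrow> 'b \<Rightarrow> real"
    and gradf :: "real^'n \<Rightarrow> real^'n" and f h :: "real^'n \<Rightarrow> real" and P :: "('b \<times> 'b) pmf"
  defines "X \<equiv> rcd_iter blk a L gradf x0"
    and "D \<equiv> \<lambda>l. Pi_pmf {..<l} undefined (\<lambda>_. P)"
  assumes step: "\<And>x. measure_pmf.expectation P (\<lambda>y. f (rcd_step blk a L gradf y x)) \<le> f x - c * h x"
  shows "measure_pmf.expectation (D (Suc l)) (\<lambda>\<omega>. f (X \<omega> (Suc l)))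
         \<le> measure_pmf.expectation (D l) (\<lambda>\<omega>. f (X \<omega> l)) - c * measure_pmf.expectation (D l) (\<lambda>\<omega>. h (X \<omega> l))"
proof -
  have fin: "integrable (D l) g" for g :: "_ \<Rightarrow> real"
    by (simp add: D_def integrable_measure_pmf_finite finite_set_Pi_pmf)
  have "measure_pmf.expectation (D (Suc l)) (\<lambda>\<omega>. f (X \<omega> (Suc l)))
        = measure_pmf.expectation (D l) (\<lambda>\<omega>. measure_pmf.expectation P (\<lambda>y. f (rcd_step blk a L gradf y (X \<omega> l))))"
    by (simp add: D_def X_def expectation_Pi_pmf_lessThan_Suc rcd_iter_fun_upd)
  also have "\<dots> \<le> measure_pmf.expectation (D l) (\<lambda>\<omega>. f (X \<omega> l) - c * h (X \<omega> l))"
    by (intro integral_mono fin step)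
  also have "\<dots> = measure_pmf.expectation (D l) (\<lambda>\<omega>. f (X \<omega> l)) - c * measure_pmf.expectation (D l) (\<lambda>\<omega>. h (X \<omega> l))"
    by (simp add: fin)
  finally show ?thesis .
qed

lemma Min_le_of_telescoping:
  fixes F G :: "nat \<Rightarrow> real"
  assumes "0 < c" and decrease: "\<And>l. F (Suc l) \<le> F l - c / 2 * G l" and bound: "B \<le> F (Suc k)"
  shows "Min (G ` {0..k}) \<le> 2 * (F 0 - B) / (c * (k + 1))"
proof -
  have telescope: "c / 2 * (\<Sum>l\<le>n. G l) \<le> F 0 - F (Suc n)" for n
  proof (induction n)
    case 0
    then show ?case
      using decrease [of 0] by simp
  next
    case (Suc n)
    have "c / 2 * (\<Sum>l\<le>Suc n. G l) = c / 2 * (\<Sum>l\<le>n. G l) + c / 2 * G (Suc n)"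
      by (simp add: distrib_left)
    with Suc.IH decrease [of "Suc n"] show ?case
      by linarith
  qed
  have "(k + 1) * Min (G ` {0..k}) \<le> (\<Sum>l\<le>k. G l)"
    using sum_mono [of "{..k}" "\<lambda>_. Min (G ` {0..k})" G] by (simp add: atLeast0AtMost)
  then have "c / 2 * ((k + 1) * Min (G ` {0..k})) \<le> c / 2 * (\<Sum>l\<le>k. G l)"
    using \<open>0 < c\<close> by (simp add: mult_left_mono)
  also have "\<dots> \<le> F 0 - B"
    using telescope [of k] bound by simp
  finally have "c / 2 * ((k + 1) * Min (G ` {0..k})) \<le> F 0 - B" .
  then have "Min (G ` {0..k}) * (c * (k + 1)) \<le> 2 * (F 0 - B)"
    by (simp add: field_simps)
  moreover have "0 < c * (k + 1)"
    using \<open>0 < c\<close> by simp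
  ultimately show ?thesis
    by (simp add: pos_le_divide_eq)
qed

theorem theorem5:
  fixes blk :: "'n::finite \<Rightarrow> 'b::finite"
    and a x0 :: "real^'n" and b :: real
    and f :: "real^'n \<Rightarrow> real" and gradf :: "real^'n \<Rightarrow> real^'n"
    and L :: "'b \<Rightarrow> 'b \<Rightarrow> real"
    and P :: "('b \<times> 'b) pmf"
    and k :: nat
  assumes blocks: "CARD('b) \<ge> 2" "surj blk"
    and a_nz: "a \<noteq> 0"
    and grad: "\<And>x. GDERIV f x :> gradf x"
    and L_sym: "\<And>i j. i \<noteq> j \<Longrightarrow> L i j = L j i"
    and L_pos: "\<And>i j. i \<noteq> j \<Longrightarrow> L i j > 0"
    and A2: "\<And>i j x s. i \<noteq> j \<Longrightarrow>
              norm (bmask blk {i, j} (gradf (x + bmask blk {i, j} s) - gradf x))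
                \<le> L i j * norm (bmask blk {i, j} s)"
    and aij_nz: "\<And>i j. i \<noteq> j \<Longrightarrow> bmask blk {i, j} a \<noteq> 0"
    and fbdd: "bdd_below (f ` {x. a \<bullet> x = b})"
    and p_sym: "\<And>i j. i \<noteq> j \<Longrightarrow> pmf P (i, j) = pmf P (j, i)"
    and p_pos: "\<And>i j. i \<noteq> j \<Longrightarrow> pmf P (i, j) > 0"
    and p_diag: "\<And>i. pmf P (i, i) = 0"
    and nu_pos: "nu2 (\<Sum>(i, j)\<in>{(i, j). i \<noteq> j}. (pmf P (i, j) / L i j) *\<^sub>R Qij blk a i j) > 0"
    and feas: "a \<bullet> x0 = b"
  shows "Min ((\<lambda>l. measure_pmf.expectation (Pi_pmf {..<l} undefined (\<lambda>_. P))
                     (\<lambda>\<omega>. (M3 a gradf (rcd_iter blk a L gradf x0 \<omega> l))\<^sup>2)) ` {0..k})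
         \<le> 2 * (f x0 - Inf (f ` {x. a \<bullet> x = b}))
           / (nu2 (\<Sum>(i, j)\<in>{(i, j). i \<noteq> j}. (pmf P (i, j) / L i j) *\<^sub>R Qij blk a i j) * (k + 1))"
proof -
  define Q where "Q = Q_weighted blk a (\<lambda>i j. pmf P (i, j) / L i j)"
  define \<nu> where "\<nu> = nu2 Q"
  define X where "X = rcd_iter blk a L gradf x0"
  define D where "D l = Pi_pmf {..<l} undefined (\<lambda>_. P)" for l :: nat
  define F where "F l = measure_pmf.expectation (D l) (\<lambda>\<omega>. f (X \<omega> l))" for l
  define G where "G l = measure_pmf.expectation (D l) (\<lambda>\<omega>. (M3 a gradf (X \<omega> l))\<^sup>2)" for l
  have w_pos: "\<And>i j. i \<noteq> j \<Longrightarrow> 0 < pmf P (i, j) / L i j"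
    using p_pos L_pos by simp
  have psd: "0 \<le> v \<bullet> (Q *v v)" for v
    unfolding Q_def using w_pos by (intro Q_weighted_nonneg) (simp add: less_imp_le)
  have definite: "\<And>v. a \<bullet> v = 0 \<Longrightarrow> v \<bullet> (Q *v v) = 0 \<Longrightarrow> v = 0"
    unfolding Q_def by (rule Q_weighted_definite [OF w_pos blocks(1) a_nz])
  have "CARD('b) \<le> CARD('n)"
    using surj_card_le [of "UNIV :: 'n set" UNIV blk] blocks(2) by simp
  then have gap: "\<nu> * (M3 a gradf x)\<^sup>2 \<le> gradf x \<bullet> (Q *v gradf x)" for x
    unfolding \<nu>_def M3_def using blocks(1) a_nz
    by (intro nu2_mult_norm_proj_perp_le psd definite) (simp_all add: Q_def Q_weighted_symmetric Q_weighted_mult_a)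
  have "measure_pmf.expectation P (\<lambda>y. f (rcd_step blk a L gradf y x))
        \<le> f x - \<nu> / 2 * (M3 a gradf x)\<^sup>2" for x
  proof -
    have "measure_pmf.expectation P (\<lambda>y. f (rcd_step blk a L gradf y x))
          \<le> f x - 1 / 2 * (gradf x \<bullet> (Q *v gradf x))"
      unfolding Q_def by (rule expectation_rcd_step_le [OF grad A2 L_pos p_diag])
    also have "\<dots> \<le> f x - \<nu> / 2 * (M3 a gradf x)\<^sup>2"
      using gap [of x] by simp
    finally show ?thesis .
  qed
  then have decrease: "F (Suc l) \<le> F l - \<nu> / 2 * G l" for l
    unfolding F_def G_def D_def X_def by (rule expectation_rcd_iter_Suc_le)
  have "Inf (f ` {x. a \<bullet> x = b}) \<le> f (X \<omega> l)" for \<omega> l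
    using fbdd by (intro cInf_lower) (auto simp: X_def rcd_iter_feasible feas)
  then have "Inf (f ` {x. a \<bullet> x = b}) \<le> F (Suc k)"
    unfolding F_def D_def
    by (intro measure_pmf.integral_ge_const integrable_measure_pmf_finite finite_set_Pi_pmf AE_I2) auto
  from Min_le_of_telescoping [OF _ decrease this] nu_pos
  show ?thesis
    by (simp add: F_def G_def D_def X_def \<nu>_def Q_def Q_weighted_def)
qed

end
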